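(* Let $R$ be a ring with unity and involution $*$, and let $a,v\in R$ with $a$ left dual $v$-core invertible. Then there exist $a_1,a_2\in R$ with $va=a_1+a_2$ such that (1) $a_1$ is left dual core invertible, (2) $a_2^2=0$, (3) $a_2^*a_1=0=a_1a_2$. In addition, for any left dual $v$-core inverse $x$ of $a$, the element $x(va)^2$ is left dual core invertible and $x$ is a left dual core inverse of it.
   Context: For $a,v\in R$, $a$ is left dual $v$-core invertible if there exists $x\in R$ such that $axva=a$, $(xva)^*=xva$ and $x^2va=x$; such $x$ is a left dual $v$-core inverse of $a$. An element $y$ is left dual core invertible if there exists $z\in R$ with $yzy=y$, $(zy)^*=zy$ and $z^2y=z$; such $z$ is a left dual core inverse of $y$. *)

theory Defs
  imports Main
begin

class ring_invol = ring_1 +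
  fixes invol :: "'a \<Rightarrow> 'a" ("_\<^sup>\<star>" [1000] 999)
  assumes invol_invol: "(x\<^sup>\<star>)\<^sup>\<star> = x"
    and invol_add: "(x + y)\<^sup>\<star> = x\<^sup>\<star> + y\<^sup>\<star>"
    and invol_mult: "(x * y)\<^sup>\<star> = y\<^sup>\<star> * x\<^sup>\<star>"

definition left_dual_v_core_inverse :: "'a::ring_invol \<Rightarrow> 'a \<Rightarrow> 'a \<Rightarrow> bool" where
  "left_dual_v_core_inverse a v x \<longleftrightarrow>
     a * x * v * a = a \<and> (x * v * a)\<^sup>\<star> = x * v * a \<and> x * x * v * a = x"

definition left_dual_v_core_invertible :: "'a::ring_invol \<Rightarrow> 'a \<Rightarrow> bool" where
  "left_dual_v_core_invertible a v \<longleftrightarrow> (\<exists>x. left_dual_v_core_inverse a v x)"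

definition left_dual_core_inverse :: "'a::ring_invol \<Rightarrow> 'a \<Rightarrow> bool" where
  "left_dual_core_inverse y z \<longleftrightarrow>
     y * z * y = y \<and> (z * y)\<^sup>\<star> = z * y \<and> z * z * y = z"

definition left_dual_core_invertible :: "'a::ring_invol \<Rightarrow> bool" where
  "left_dual_core_invertible y \<longleftrightarrow> (\<exists>z. left_dual_core_inverse y z)"

end

theory Submission
  imports Defs
begin

text \<open>The three conditions on \<open>x\<close> only involve \<open>a\<close> through \<open>v * a\<close> (after multiplying the first one
  by \<open>v\<close>), so \<open>x\<close> is a left dual core inverse of \<open>b = v * a\<close>. Then \<open>p = x * b\<close> is a self-adjoint
  idempotent with \<open>b * p = b\<close>, and \<open>b = p * b + (1 - p) * b\<close> is the required decomposition:
  \<open>p * b = x * b\<^sup>2\<close> still has \<open>x\<close> as left dual core inverse, while \<open>(1 - p) * b\<close> squares to zero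
  and is orthogonal to \<open>p * b\<close> in the stated sense.\<close>

lemma invol_diff: "((x::'a::ring_invol) - y)\<^sup>\<star> = x\<^sup>\<star> - y\<^sup>\<star>"
  by (metis add_diff_cancel diff_add_cancel invol_add)

lemma left_dual_core_inverse_if_v_core_inverse:
  fixes a v x :: "'a::ring_invol"
  assumes "left_dual_v_core_inverse a v x"
  shows "left_dual_core_inverse (v * a) x"
proof -
  have "v * a * x * (v * a) = v * (a * x * v * a)"
    by (simp add: mult.assoc)
  with assms show ?thesis
    by (simp add: left_dual_v_core_inverse_def left_dual_core_inverse_def mult.assoc)
qed

lemma left_dual_core_inverse_projection:
  fixes y z :: "'a::ring_invol"
  assumes "left_dual_core_inverse y z"
  shows "y * (z * y) = y" and "z * y * (z * y) = z * y" and "(z * y)\<^sup>\<star> = z * y"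
proof -
  show "y * (z * y) = y"
    using assms by (simp add: left_dual_core_inverse_def mult.assoc[symmetric])
  then show "z * y * (z * y) = z * y"
    by (simp add: mult.assoc)
  show "(z * y)\<^sup>\<star> = z * y"
    using assms by (simp add: left_dual_core_inverse_def)
qed

lemma left_dual_core_inverse_core_part:
  fixes y z :: "'a::ring_invol"
  assumes "left_dual_core_inverse y z"
  shows "left_dual_core_inverse (z * y ^ 2) z"
proof -
  have yzy: "y * z * y = y" and sa: "(z * y)\<^sup>\<star> = z * y" and zzy: "z * z * y = z"
    using assms by (simp_all add: left_dual_core_inverse_def)
  have "z * y ^ 2 * z * (z * y ^ 2) = z * y * (y * (z * z * y)) * y"
    by (simp add: power2_eq_square mult.assoc)
  also have "\<dots> = z * y * (y * z * y)"
    using zzy by (simp add: mult.assoc)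
  also have "\<dots> = z * y ^ 2"
    using yzy by (simp add: power2_eq_square mult.assoc)
  finally have "z * y ^ 2 * z * (z * y ^ 2) = z * y ^ 2" .
  moreover have "z * (z * y ^ 2) = z * y"
    using zzy by (simp add: power2_eq_square mult.assoc[symmetric])
  moreover have "z * z * (z * y ^ 2) = z * (z * z * y) * y"
    by (simp add: power2_eq_square mult.assoc)
  then have "z * z * (z * y ^ 2) = z"
    using zzy by simp
  ultimately show ?thesis
    using sa by (simp add: left_dual_core_inverse_def)
qed

lemma left_dual_core_inverse_nilpotent_part:
  fixes y z :: "'a::ring_invol"
  assumes "left_dual_core_inverse y z"
  defines "n \<equiv> y - z * y ^ 2"
  shows "n ^ 2 = 0" and "n\<^sup>\<star> * (z * y ^ 2) = 0" and "z * y ^ 2 * n = 0"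
proof -
  define p where "p = z * y"
  have yp: "y * p = y" and pp: "p * p = p" and sa: "p\<^sup>\<star> = p"
    using left_dual_core_inverse_projection[OF assms(1)] by (simp_all add: p_def)
  have core: "z * y ^ 2 = p * y"
    by (simp add: p_def power2_eq_square mult.assoc)
  have n: "n = y - p * y"
    by (simp add: n_def core)
  have "n ^ 2 = y * y - y * p * y - p * y * y + p * (y * p) * y"
    by (simp add: n power2_eq_square algebra_simps)
  then show "n ^ 2 = 0"
    by (simp add: yp mult.assoc[symmetric])
  have "n\<^sup>\<star> * (z * y ^ 2) = y\<^sup>\<star> * (p * y) - y\<^sup>\<star> * (p * p * y)"
    by (simp add: n core invol_diff invol_mult sa algebra_simps)
  then show "n\<^sup>\<star> * (z * y ^ 2) = 0"
    by (simp add: pp)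
  have "z * y ^ 2 * n = p * y * y - p * (y * p) * y"
    by (simp add: n core algebra_simps)
  then show "z * y ^ 2 * n = 0"
    by (simp add: yp)
qed

theorem theorem3p3:
  fixes a v :: "'a::ring_invol"
  assumes "left_dual_v_core_invertible a v"
  shows "(\<exists>a1 a2. v * a = a1 + a2 \<and> left_dual_core_invertible a1 \<and> a2 ^ 2 = 0
            \<and> a2\<^sup>\<star> * a1 = 0 \<and> a1 * a2 = 0)
         \<and> (\<forall>x. left_dual_v_core_inverse a v x \<longrightarrow>
               left_dual_core_invertible (x * (v * a) ^ 2)
             \<and> left_dual_core_inverse (x * (v * a) ^ 2) x)"
proof -
  have core: "left_dual_core_inverse (x * (v * a) ^ 2) x" if "left_dual_v_core_inverse a v x" for x
    using left_dual_core_inverse_core_part left_dual_core_inverse_if_v_core_inverse that by blast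
  obtain x where x: "left_dual_v_core_inverse a v x"
    using assms left_dual_v_core_invertible_def by blast
  note nil = left_dual_core_inverse_nilpotent_part[OF left_dual_core_inverse_if_v_core_inverse[OF x]]
  have "v * a = x * (v * a) ^ 2 + (v * a - x * (v * a) ^ 2)"
    by simp
  with nil core[OF x] have "\<exists>a1 a2. v * a = a1 + a2 \<and> left_dual_core_invertible a1 \<and> a2 ^ 2 = 0
            \<and> a2\<^sup>\<star> * a1 = 0 \<and> a1 * a2 = 0"
    unfolding left_dual_core_invertible_def by blast
  with core show ?thesis
    unfolding left_dual_core_invertible_def by blast
qed

end
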